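(* There exist a financial system $S$ in the base model (all contracts of the same priority) and banks $u\neq v$ with a debt contract from $u$ to $v$ of positive weight, such that: $S$ has exactly one solution $r$; the system $S'$ obtained from $S$ by deleting this debt contract (everything else unchanged) has exactly one solution $r'$; and $q'_v(r')>q_v(r)$, where $q_v$ and $q'_v$ denote the payoff of $v$ in $S$ and $S'$, respectively.
   Context: A financial system with payment priorities consists of: a finite set $V$ of banks; external assets $e_v\ge 0$ for each $v\in V$; a number $P\ge 1$ of priority levels; and a finite set of contracts, each of which is either a debt contract from a debtor $u$ to a creditor $v\neq u$ with weight $c>0$, or a credit default swap (CDS) from a debtor $u$ to a creditor $v\neq u$ in reference to a bank $w\notin\{u,v\}$ (the reference entity) with weight $c>0$. Every contract has a priority in $\{1,\dots,P\}$ (1 is the highest priority). It is assumed that every bank that is the reference entity of some CDS is the debtor of at least one debt contract of positive weight. Given a recovery rate vector $r\in[0,1]^V$: the liability of a contract $k$ is $l_k(r)=c$ if $k$ is a debt of weight $c$, and $l_k(r)=c\,(1-r_w)$ if $k$ is a CDS of weight $c$ in reference to $w$. For a bank $v$, $l_v(r)$ is the sum of the liabilities of the contracts with debtor $v$; $l_v^{(\rho)}(r)$ is the sum of the liabilities of contracts with debtor $v$ and priority $\rho$; and $l_v^{(\le\rho)}(r)=\sum_{i=1}^{\rho}l_v^{(i)}(r)$ (with $l_v^{(\le 0)}=0$). The payment on a contract $k$ with debtor $v$ and priority $\rho$ is $p_k(r)=l_k(r)\cdot\min\{1,\max\{0,(r_v l_v(r)-l_v^{(\le\rho-1)}(r))/l_v^{(\rho)}(r)\}\}$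 (and $p_k(r)=0$ if $l_v^{(\rho)}(r)=0$). The assets of $v$ are $a_v(r)=e_v+\sum_k p_k(r)$, summing over contracts $k$ with creditor $v$. A vector $r\in[0,1]^V$ is a solution (clearing vector) if for every $v\in V$: $r_v=1$ when $a_v(r)\ge l_v(r)$, and $r_v=a_v(r)/l_v(r)$ when $a_v(r)<l_v(r)$. The payoff of $v$ is $q_v(r)=\max\{a_v(r)-l_v(r),0\}$. When $P=1$, payments reduce to $p_k(r)=r_v\,l_k(r)$ (principle of proportionality); this is called the base model. *)

theory Defs
  imports Complex_Main
begin

text \<open>Contracts: Debt debtor creditor weight priority;
  CDS debtor creditor reference weight priority.\<close>
datatype 'b contract =
    Debt 'b 'b real nat
  | CDS 'b 'b 'b real nat

fun debtor :: "'b contract \<Rightarrow> 'b" where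
  "debtor (Debt u v c p) = u" | "debtor (CDS u v w c p) = u"
fun creditor :: "'b contract \<Rightarrow> 'b" where
  "creditor (Debt u v c p) = v" | "creditor (CDS u v w c p) = v"
fun weight :: "'b contract \<Rightarrow> real" where
  "weight (Debt u v c p) = c" | "weight (CDS u v w c p) = c"
fun prio :: "'b contract \<Rightarrow> nat" where
  "prio (Debt u v c p) = p" | "prio (CDS u v w c p) = p"

record ('b, 'k) fsys =
  banks :: "'b set"
  ext :: "'b \<Rightarrow> real"
  prios :: nat
  cids :: "'k set"
  ctr :: "'k \<Rightarrow> 'b contract"

definition valid_contract :: "('b,'k) fsys \<Rightarrow> 'b contract \<Rightarrow> bool" where
  "valid_contract S c \<longleftrightarrow>
     (case c of
        Debt u v w p \<Rightarrow> u \<in> banks S \<and> v \<in> banks S \<and> u \<noteq> v \<and> w > 0 \<and> 1 \<le> p \<and> p \<le> prios S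
      | CDS u v x w p \<Rightarrow> u \<in> banks S \<and> v \<in> banks S \<and> x \<in> banks S \<and> u \<noteq> v
           \<and> x \<noteq> u \<and> x \<noteq> v \<and> w > 0 \<and> 1 \<le> p \<and> p \<le> prios S)"

definition valid_system :: "('b,'k) fsys \<Rightarrow> bool" where
  "valid_system S \<longleftrightarrow>
     finite (banks S) \<and> (\<forall>v\<in>banks S. ext S v \<ge> 0) \<and> prios S \<ge> 1 \<and> finite (cids S)
     \<and> (\<forall>k\<in>cids S. valid_contract S (ctr S k))
     \<and> (\<forall>k\<in>cids S. \<forall>u v x w p. ctr S k = CDS u v x w p \<longrightarrow>
          (\<exists>k'\<in>cids S. \<exists>v' w' p'. ctr S k' = Debt x v' w' p' \<and> w' > 0))"

definition base_model :: "('b,'k) fsys \<Rightarrow> bool" where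
  "base_model S \<longleftrightarrow> valid_system S \<and> prios S = 1"

fun liab_c :: "('b \<Rightarrow> real) \<Rightarrow> 'b contract \<Rightarrow> real" where
  "liab_c r (Debt u v c p) = c"
| "liab_c r (CDS u v w c p) = c * (1 - r w)"

definition liab :: "('b,'k) fsys \<Rightarrow> ('b \<Rightarrow> real) \<Rightarrow> 'k \<Rightarrow> real" where
  "liab S r k = liab_c r (ctr S k)"

definition lbank :: "('b,'k) fsys \<Rightarrow> ('b \<Rightarrow> real) \<Rightarrow> 'b \<Rightarrow> real" where
  "lbank S r v = (\<Sum>k\<in>{k\<in>cids S. debtor (ctr S k) = v}. liab S r k)"

definition lprio :: "('b,'k) fsys \<Rightarrow> ('b \<Rightarrow> real) \<Rightarrow> 'b \<Rightarrow> nat \<Rightarrow> real" where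
  "lprio S r v \<rho> = (\<Sum>k\<in>{k\<in>cids S. debtor (ctr S k) = v \<and> prio (ctr S k) = \<rho>}. liab S r k)"

definition lle :: "('b,'k) fsys \<Rightarrow> ('b \<Rightarrow> real) \<Rightarrow> 'b \<Rightarrow> nat \<Rightarrow> real" where
  "lle S r v \<rho> = (\<Sum>i\<in>{1..\<rho>}. lprio S r v i)"

definition pay :: "('b,'k) fsys \<Rightarrow> ('b \<Rightarrow> real) \<Rightarrow> 'k \<Rightarrow> real" where
  "pay S r k =
    (let v = debtor (ctr S k); \<rho> = prio (ctr S k) in
     if lprio S r v \<rho> = 0 then 0
     else liab S r k * min 1 (max 0 ((r v * lbank S r v - lle S r v (\<rho> - 1)) / lprio S r v \<rho>)))"

definition assets :: "('b,'k) fsys \<Rightarrow> ('b \<Rightarrow> real) \<Rightarrow> 'b \<Rightarrow> real" where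
  "assets S r v = ext S v + (\<Sum>k\<in>{k\<in>cids S. creditor (ctr S k) = v}. pay S r k)"

definition is_solution :: "('b,'k) fsys \<Rightarrow> ('b \<Rightarrow> real) \<Rightarrow> bool" where
  "is_solution S r \<longleftrightarrow>
     (\<forall>v\<in>banks S. 0 \<le> r v \<and> r v \<le> 1
        \<and> (assets S r v \<ge> lbank S r v \<longrightarrow> r v = 1)
        \<and> (assets S r v < lbank S r v \<longrightarrow> r v = assets S r v / lbank S r v))"

definition unique_solution :: "('b,'k) fsys \<Rightarrow> ('b \<Rightarrow> real) \<Rightarrow> bool" where
  "unique_solution S r \<longleftrightarrow> is_solution S r \<and>
     (\<forall>r'. is_solution S r' \<longrightarrow> (\<forall>v\<in>banks S. r' v = r v))"

definition payoff :: "('b,'k) fsys \<Rightarrow> ('b \<Rightarrow> real) \<Rightarrow> 'b \<Rightarrow> real" where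
  "payoff S r v = max (assets S r v - lbank S r v) 0"

definition delete_contract :: "('b,'k) fsys \<Rightarrow> 'k \<Rightarrow> ('b,'k) fsys" where
  "delete_contract S k = S\<lparr>cids := cids S - {k}\<rparr>"

end

theory Submission
  imports Defs
begin

text \<open>Bank 0 owes 1 to bank 1 and 1 to bank 2 but has external assets 1 only, so it recovers 1/2.
  Bank 1 has sold bank 2 a CDS of weight 10 on bank 0, which therefore costs it 5, while the
  debt from bank 0 brings it only 1/2: its payoff is 10 + 1/2 - 5. Once the debt from 0 to 1 is
  deleted, bank 0 is solvent, the CDS pays nothing and the payoff of bank 1 rises to 10. In both
  systems the recovery rates are forced one bank after the other, so the solutions are unique.\<close>

lemma liab_nonneg:
  assumes "valid_system S" "k \<in> cids S" "\<forall>w\<in>banks S. r w \<le> 1"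
  shows "0 \<le> liab S r k"
proof -
  have "valid_contract S (ctr S k)"
    using assms(1,2) by (simp add: valid_system_def)
  then show ?thesis
    using assms(3) by (cases "ctr S k") (auto simp: valid_contract_def liab_def)
qed

lemma pay_base_model:
  assumes base: "base_model S" and k: "k \<in> cids S"
    and r: "\<forall>w\<in>banks S. 0 \<le> r w \<and> r w \<le> 1"
  shows "pay S r k = r (debtor (ctr S k)) * liab S r k"
proof -
  define v where "v = debtor (ctr S k)"
  define K where "K = {k\<in>cids S. debtor (ctr S k) = v}"
  have valid: "valid_system S" and single: "prios S = 1"
    using base by (auto simp: base_model_def)
  have contract: "valid_contract S (ctr S j)" if "j \<in> cids S" for j
    using valid that by (simp add: valid_system_def)
  have prio_1: "prio (ctr S j) = 1" if "j \<in> cids S" for j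
    using contract[OF that] single by (cases "ctr S j") (auto simp: valid_contract_def)
  have "v \<in> banks S"
    using contract[OF k] by (cases "ctr S k") (auto simp: valid_contract_def v_def)
  then have rv: "0 \<le> r v" "r v \<le> 1"
    using r by auto
  have lprio_eq: "lprio S r v 1 = lbank S r v"
    unfolding lprio_def lbank_def by (rule sum.cong) (auto simp: prio_1)
  have lbank_K: "lbank S r v = (\<Sum>j\<in>K. liab S r j)"
    by (simp add: lbank_def K_def)
  have finite_K: "finite K" and k_K: "k \<in> K"
    using valid k by (auto simp: valid_system_def K_def v_def)
  have liab_K: "0 \<le> liab S r j" if "j \<in> K" for j
    using that valid r by (intro liab_nonneg) (auto simp: K_def)
  show ?thesis
  proof (cases "lbank S r v = 0")
    case True
    then have "liab S r k = 0"
      using sum_nonneg_eq_0_iff[OF finite_K liab_K] k_K lbank_K by auto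
    then show ?thesis
      unfolding pay_def Let_def prio_1[OF k] v_def[symmetric] lprio_eq using True by simp
  next
    case False
    then show ?thesis
      unfolding pay_def Let_def prio_1[OF k] v_def[symmetric] lprio_eq using rv
      by (simp add: lle_def)
  qed
qed

lemma assets_base_model:
  assumes "base_model S" "\<forall>w\<in>banks S. 0 \<le> r w \<and> r w \<le> 1"
  shows "assets S r v =
    ext S v + (\<Sum>k\<in>{k\<in>cids S. creditor (ctr S k) = v}. r (debtor (ctr S k)) * liab S r k)"
  unfolding assets_def using assms by (auto intro: sum.cong simp: pay_base_model)

lemma unique_solutionI:
  assumes "\<And>r. is_solution S r \<longleftrightarrow> (\<forall>v\<in>banks S. r v = r0 v)"
  shows "unique_solution S r0"
  using assms by (simp add: unique_solution_def)

lemma is_solution_recovery_bounds: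
  "is_solution S r \<Longrightarrow> \<forall>v\<in>banks S. 0 \<le> r v \<and> r v \<le> 1"
  by (simp add: is_solution_def)

definition example_sys :: "(nat, nat) fsys" where
  "example_sys =
    \<lparr>banks = {0, 1, 2}, ext = (\<lambda>v. if v = 0 then 1 else if v = 1 then 10 else 0),
     prios = 1, cids = {0, 1, 2},
     ctr = (\<lambda>k. if k = 0 then Debt 0 1 1 1 else if k = 1 then Debt 0 2 1 1 else CDS 1 2 0 10 1)\<rparr>"

abbreviation example_sys_deleted :: "(nat, nat) fsys" where
  "example_sys_deleted \<equiv> delete_contract example_sys 0"

lemma base_model_example_sys: "base_model example_sys"
  by (simp add: base_model_def valid_system_def valid_contract_def example_sys_def)

lemma base_model_example_sys_deleted: "base_model example_sys_deleted"
  by (simp add: base_model_def valid_system_def valid_contract_def delete_contract_def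
      example_sys_def)

lemma banks_example_sys: "banks example_sys = {0, 1, 2}" "banks example_sys_deleted = {0, 1, 2}"
  by (simp_all add: example_sys_def delete_contract_def)

lemma lbank_example_sys:
  "lbank example_sys r 0 = 2" "lbank example_sys r 1 = 10 * (1 - r 0)" "lbank example_sys r 2 = 0"
  unfolding lbank_def by (subst sum.inter_filter; simp add: liab_def example_sys_def)+

lemma lbank_example_sys_deleted:
  "lbank example_sys_deleted r 0 = 1" "lbank example_sys_deleted r 1 = 10 * (1 - r 0)"
  "lbank example_sys_deleted r 2 = 0"
  unfolding lbank_def
  by (subst sum.inter_filter; simp add: liab_def example_sys_def delete_contract_def)+

lemma assets_example_sys:
  assumes "\<forall>w\<in>banks example_sys. 0 \<le> r w \<and> r w \<le> 1"
  shows "assets example_sys r 0 = 1" "assets example_sys r 1 = 10 + r 0"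
    "assets example_sys r 2 = r 0 + 10 * r 1 * (1 - r 0)"
  unfolding assets_base_model[OF base_model_example_sys assms]
  by (subst sum.inter_filter; simp add: liab_def example_sys_def)+

lemma assets_example_sys_deleted:
  assumes "\<forall>w\<in>banks example_sys_deleted. 0 \<le> r w \<and> r w \<le> 1"
  shows "assets example_sys_deleted r 0 = 1" "assets example_sys_deleted r 1 = 10"
    "assets example_sys_deleted r 2 = r 0 + 10 * r 1 * (1 - r 0)"
  unfolding assets_base_model[OF base_model_example_sys_deleted assms]
  by (subst sum.inter_filter; simp add: liab_def example_sys_def delete_contract_def)+

lemma is_solution_example_sys_iff:
  "is_solution example_sys r \<longleftrightarrow> r 0 = 1/2 \<and> r 1 = 1 \<and> r 2 = 1"
proof
  assume sol: "is_solution example_sys r"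
  note bounds = is_solution_recovery_bounds[OF sol]
  note balance = assets_example_sys[OF bounds] lbank_example_sys
  have clearing: "(lbank example_sys r v \<le> assets example_sys r v \<longrightarrow> r v = 1)
      \<and> (assets example_sys r v < lbank example_sys r v
        \<longrightarrow> r v = assets example_sys r v / lbank example_sys r v)"
    if "v \<in> {0, 1, 2}" for v
    using sol that unfolding is_solution_def banks_example_sys by blast
  have r0: "r 0 = 1/2"
    using clearing[of 0] balance by simp
  moreover have "r 1 = 1"
    using clearing[of 1] balance r0 by simp
  moreover have "r 2 = 1"
    using clearing[of 2] balance bounds r0 by (simp add: banks_example_sys)
  ultimately show "r 0 = 1/2 \<and> r 1 = 1 \<and> r 2 = 1"
    by simp
next
  assume rec: "r 0 = 1/2 \<and> r 1 = 1 \<and> r 2 = 1"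
  then have bounds: "\<forall>w\<in>banks example_sys. 0 \<le> r w \<and> r w \<le> 1"
    by (simp add: banks_example_sys)
  show "is_solution example_sys r"
    using rec bounds assets_example_sys[OF bounds] lbank_example_sys
    unfolding is_solution_def banks_example_sys by simp
qed

lemma is_solution_example_sys_deleted_iff:
  "is_solution example_sys_deleted r \<longleftrightarrow> r 0 = 1 \<and> r 1 = 1 \<and> r 2 = 1"
proof
  assume sol: "is_solution example_sys_deleted r"
  note bounds = is_solution_recovery_bounds[OF sol]
  note balance = assets_example_sys_deleted[OF bounds] lbank_example_sys_deleted
  have clearing: "lbank example_sys_deleted r v \<le> assets example_sys_deleted r v \<longrightarrow> r v = 1"
    if "v \<in> {0, 1, 2}" for v
    using sol that unfolding is_solution_def banks_example_sys by blast
  have r0: "r 0 = 1"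
    using clearing[of 0] balance by simp
  moreover have "r 1 = 1"
    using clearing[of 1] balance r0 by simp
  moreover have "r 2 = 1"
    using clearing[of 2] balance r0 by simp
  ultimately show "r 0 = 1 \<and> r 1 = 1 \<and> r 2 = 1"
    by simp
next
  assume rec: "r 0 = 1 \<and> r 1 = 1 \<and> r 2 = 1"
  then have bounds: "\<forall>w\<in>banks example_sys_deleted. 0 \<le> r w \<and> r w \<le> 1"
    by (simp add: banks_example_sys)
  show "is_solution example_sys_deleted r"
    using rec bounds assets_example_sys_deleted[OF bounds] lbank_example_sys_deleted
    unfolding is_solution_def banks_example_sys by simp
qed

theorem mainTheorem2:
  shows "\<exists>(S :: (nat, nat) fsys) u v k c p r r'.
     base_model S \<and> u \<noteq> v \<and> k \<in> cids S \<and> ctr S k = Debt u v c p \<and> c > 0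
     \<and> unique_solution S r
     \<and> unique_solution (delete_contract S k) r'
     \<and> payoff (delete_contract S k) r' v > payoff S r v"
proof -
  define r :: "nat \<Rightarrow> real" where "r = (\<lambda>v. if v = 0 then 1/2 else 1)"
  define r' :: "nat \<Rightarrow> real" where "r' = (\<lambda>v. 1)"
  have unique: "unique_solution example_sys r"
    by (rule unique_solutionI) (simp add: is_solution_example_sys_iff banks_example_sys r_def)
  have unique': "unique_solution example_sys_deleted r'"
    by (rule unique_solutionI)
      (simp add: is_solution_example_sys_deleted_iff banks_example_sys r'_def)
  have "payoff example_sys r 1 = 11/2"
    using assets_example_sys(2) lbank_example_sys(2)
    by (simp add: payoff_def banks_example_sys r_def)
  moreover have "payoff example_sys_deleted r' 1 = 10"
    using assets_example_sys_deleted(2) lbank_example_sys_deleted(2)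
    by (simp add: payoff_def banks_example_sys r'_def)
  ultimately show ?thesis
    using base_model_example_sys unique unique'
    by (intro exI[of _ example_sys] exI[of _ 0] exI[of _ 1] exI[of _ 0] exI[of _ 1] exI[of _ 1]
        exI[of _ r] exI[of _ r']) (simp add: example_sys_def)
qed

end
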